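(* The validation error at $\tilde C$ satisfies $$E_v(w^*_{\tilde C})\ge \frac1{n'}\Big(\#\{i:y'_i=+1,\ \hat w^\top x'_i+\delta(x'_i)<0\}+\#\{i:y'_i=-1,\ \hat w^\top x'_i-\gamma(x'_i)>0\}\Big)$$ and $$E_v(w^*_{\tilde C})\le 1-\frac1{n'}\Big(\#\{i:y'_i=+1,\ \hat w^\top x'_i-\gamma(x'_i)\ge0\}+\#\{i:y'_i=-1,\ \hat w^\top x'_i+\delta(x'_i)\le 0\}\Big).$$
   Context: Let $\{(x_i,y_i)\}_{i=1}^n\subset\mathbb R^d\times\{-1,1\}$ be a training set and $\{(x'_i,y'_i)\}_{i=1}^{n'}\subset\mathbb R^d\times\{-1,1\}$ a validation set. Let $\ell:\{-1,1\}\times\mathbb R\to\mathbb R$ be convex in its second argument, and set $\ell_i(w):=\ell(y_i,w^\top x_i)$. For $C>0$ let $w^*_C$ be the (unique) minimizer over $w\in\mathbb R^d$ of $P_C(w)=\frac12\|w\|^2+C\sum_{i=1}^n\ell_i(w)$. The validation error of $w\in\mathbb R^d$ is $E_v(w):=\frac1{n'}\#\{i\in\{1,\dots,n'\}: y'_iw^\top x'_i<0\}$ (a score exactly $0$ counts as correct). Fix $\tilde C>0$ and an arbitrary $\hat w\in\mathbb R^d$; for each $i$ let $\xi_i\in\partial\ell_i(\hat w)$, and set $g:=\hat w+\tilde C\sum_{i=1}^n\xi_i$. For $x\in\mathbb R^d$ define $\gamma(x):=\frac12(\|g\|\|x\|+g^\top x)$, $\delta(x):=\frac12(\|g\|\|x\|-g^\top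 x)$. *)

theory Defs
  imports "HOL-Analysis.Analysis"
begin

definition subdiff :: "('a::real_inner \<Rightarrow> real) \<Rightarrow> 'a \<Rightarrow> 'a set" where
  "subdiff f w = {\<xi>. \<forall>v. f v \<ge> f w + \<xi> \<bullet> (v - w)}"

definition primal_obj ::
  "(real \<Rightarrow> real \<Rightarrow> real) \<Rightarrow> nat \<Rightarrow> (nat \<Rightarrow> 'a::real_inner) \<Rightarrow> (nat \<Rightarrow> real) \<Rightarrow> real \<Rightarrow> 'a \<Rightarrow> real" where
  "primal_obj loss n x y C w = (1/2) * (norm w)^2 + C * (\<Sum>i=1..n. loss (y i) (w \<bullet> x i))"

text \<open>Validation error E_v(w) (a score exactly 0 counts as correct).\<close>
definition val_err :: "nat \<Rightarrow> (nat \<Rightarrow> 'a::real_inner) \<Rightarrow> (nat \<Rightarrow> real) \<Rightarrow> 'a \<Rightarrow> real" where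
  "val_err n' x' y' w = real (card {i\<in>{1..n'}. y' i * (w \<bullet> x' i) < 0}) / real n'"

definition gam :: "'a::real_inner \<Rightarrow> 'a \<Rightarrow> real" where
  "gam g x = (1/2) * (norm g * norm x + g \<bullet> x)"

definition del :: "'a::real_inner \<Rightarrow> 'a \<Rightarrow> real" where
  "del g x = (1/2) * (norm g * norm x - g \<bullet> x)"

end

theory Submission
  imports Defs
begin

text \<open>The minimizer \<open>w\<^sup>*\<close> of \<open>\<parallel>w\<parallel>\<^sup>2/2 + C L(w)\<close> satisfies the variational inequality
  \<open>w\<^sup>* \<bullet> (v - w\<^sup>*) + C (L v - L w\<^sup>*) \<ge> 0\<close>. Taking \<open>v = \<hat>w\<close> and combining with the subgradient
  inequality of \<open>\<Sum>\<xi>\<^sub>i\<close> at \<open>\<hat>w\<close> gives \<open>g \<bullet> d + \<parallel>d\<parallel>\<^sup>2 \<le> 0\<close> for \<open>d = w\<^sup>* - \<hat>w\<close>, i.e. \<open>w\<^sup>*\<close> lies in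
  the closed ball with centre \<open>\<hat>w - g/2\<close> and radius \<open>\<parallel>g\<parallel>/2\<close>. On that ball every score \<open>w \<bullet> x\<close>
  lies in \<open>[\<hat>w \<bullet> x - \<gamma>(x), \<hat>w \<bullet> x + \<delta>(x)]\<close>, which fixes the sign of \<open>w\<^sup>* \<bullet> x'\<^sub>i\<close> at every
  validation point counted in the two bounds.\<close>

lemma nonneg_if_nonneg_plus_small_multiple:
  fixes a b :: real
  assumes "\<And>t. 0 < t \<Longrightarrow> t \<le> 1 \<Longrightarrow> 0 \<le> a + t * b"
  shows "0 \<le> a"
proof (rule tendsto_lowerbound)
  show "((\<lambda>t. a + t * b) \<longlongrightarrow> a) (at_right 0)"
    by (auto intro!: tendsto_eq_intros)
  have "\<forall>\<^sub>F t in at_right 0. 0 < t \<and> t < (1::real)"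
    by (intro eventually_conj eventually_at_right_less)
      (auto simp: eventually_at_right_field intro: exI[of _ 1])
  then show "\<forall>\<^sub>F t in at_right 0. 0 \<le> a + t * b"
    by eventually_elim (simp add: assms)
qed simp

lemma convex_on_sum_fun:
  assumes "finite I" "\<And>i. i \<in> I \<Longrightarrow> convex_on S (f i)" "convex S"
  shows "convex_on S (\<lambda>v. \<Sum>i\<in>I. f i v)"
  using assms by (induction I rule: finite_induct) (auto simp: convex_on_const)

lemma convex_on_compose_inner:
  fixes a :: "'a::real_inner"
  assumes "convex_on UNIV h"
  shows "convex_on UNIV (\<lambda>w. h (w \<bullet> a))"
  using convex_onD[OF assms] by (intro convex_onI) (simp_all add: inner_add_left)

lemma subdiff_sum:
  assumes "finite I" "\<And>i. i \<in> I \<Longrightarrow> \<xi> i \<in> subdiff (f i) w"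
  shows "(\<Sum>i\<in>I. \<xi> i) \<in> subdiff (\<lambda>v. \<Sum>i\<in>I. f i v) w"
proof -
  have "(\<Sum>i\<in>I. f i w + \<xi> i \<bullet> (v - w)) \<le> (\<Sum>i\<in>I. f i v)" for v
    using assms(2) by (intro sum_mono) (auto simp: subdiff_def)
  then show ?thesis
    by (simp add: subdiff_def sum.distrib inner_sum_left)
qed

lemma subdiff_cmul:
  fixes c :: real
  assumes "0 \<le> c" "\<xi> \<in> subdiff f w"
  shows "c *\<^sub>R \<xi> \<in> subdiff (\<lambda>v. c * f v) w"
proof -
  have "c * (f w + \<xi> \<bullet> (v - w)) \<le> c * f v" for v
    using assms by (intro mult_left_mono) (auto simp: subdiff_def)
  then show ?thesis
    by (simp add: subdiff_def distrib_left)
qed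

lemma regularized_minimizer_variational_inequality:
  fixes f :: "'a::real_inner \<Rightarrow> real"
  assumes "convex_on UNIV f"
    and min: "\<And>w. (1/2) * (norm w\<^sub>0)\<^sup>2 + f w\<^sub>0 \<le> (1/2) * (norm w)\<^sup>2 + f w"
  shows "0 \<le> w\<^sub>0 \<bullet> (v - w\<^sub>0) + (f v - f w\<^sub>0)"
proof (rule nonneg_if_nonneg_plus_small_multiple)
  fix t :: real assume t: "0 < t" "t \<le> 1"
  define e where "e = v - w\<^sub>0"
  have "(1/2) * (norm w\<^sub>0)\<^sup>2 + f w\<^sub>0 \<le> (1/2) * (norm (w\<^sub>0 + t *\<^sub>R e))\<^sup>2 + f ((1 - t) *\<^sub>R w\<^sub>0 + t *\<^sub>R v)"
    using min[of "w\<^sub>0 + t *\<^sub>R e"] by (simp add: e_def algebra_simps)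
  also have "\<dots> \<le> (1/2) * (norm (w\<^sub>0 + t *\<^sub>R e))\<^sup>2 + ((1 - t) * f w\<^sub>0 + t * f v)"
    using convex_onD[OF assms(1)] t by simp
  also have "(norm (w\<^sub>0 + t *\<^sub>R e))\<^sup>2 = (norm w\<^sub>0)\<^sup>2 + 2 * t * (w\<^sub>0 \<bullet> e) + t\<^sup>2 * (norm e)\<^sup>2"
    unfolding power2_norm_eq_inner by (simp add: algebra_simps inner_commute power2_eq_square)
  finally have "0 \<le> t * ((w\<^sub>0 \<bullet> e + (f v - f w\<^sub>0)) + t * ((norm e)\<^sup>2 / 2))"
    by (simp add: algebra_simps power2_eq_square)
  then show "0 \<le> (w\<^sub>0 \<bullet> (v - w\<^sub>0) + (f v - f w\<^sub>0)) + t * ((norm e)\<^sup>2 / 2)"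
    using t by (simp add: e_def zero_le_mult_iff)
qed

lemma regularized_minimizer_in_cball:
  fixes f :: "'a::real_inner \<Rightarrow> real"
  assumes "convex_on UNIV f"
    and "\<And>w. (1/2) * (norm w\<^sub>0)\<^sup>2 + f w\<^sub>0 \<le> (1/2) * (norm w)\<^sup>2 + f w"
    and "\<xi> \<in> subdiff f w\<^sub>1"
  shows "w\<^sub>0 \<in> cball (w\<^sub>1 - (1/2) *\<^sub>R (w\<^sub>1 + \<xi>)) (norm (w\<^sub>1 + \<xi>) / 2)"
proof -
  define g d where "g = w\<^sub>1 + \<xi>" and "d = w\<^sub>0 - w\<^sub>1"
  have "0 \<le> w\<^sub>0 \<bullet> (w\<^sub>1 - w\<^sub>0) + (f w\<^sub>1 - f w\<^sub>0)"
    using regularized_minimizer_variational_inequality[OF assms(1,2)] .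
  moreover have "f w\<^sub>1 + \<xi> \<bullet> d \<le> f w\<^sub>0"
    using assms(3) by (simp add: subdiff_def d_def)
  ultimately have "g \<bullet> d + (norm d)\<^sup>2 \<le> 0"
    by (simp add: g_def d_def power2_norm_eq_inner algebra_simps inner_commute)
  moreover have "(norm (d + (1/2) *\<^sub>R g))\<^sup>2 = (norm d)\<^sup>2 + g \<bullet> d + (norm g)\<^sup>2 / 4"
    unfolding power2_norm_eq_inner by (simp add: algebra_simps inner_commute power2_eq_square)
  ultimately have "(norm (d + (1/2) *\<^sub>R g))\<^sup>2 \<le> (norm g / 2)\<^sup>2"
    by (simp add: power_divide)
  then have "norm (d + (1/2) *\<^sub>R g) \<le> norm g / 2"
    by (rule power2_le_imp_le) simp
  moreover have "d + (1/2) *\<^sub>R g = w\<^sub>0 - (w\<^sub>1 - (1/2) *\<^sub>R g)"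
    by (simp add: d_def)
  ultimately show ?thesis
    by (simp add: dist_norm norm_minus_commute flip: g_def)
qed

lemma inner_bounds_on_cball:
  fixes w w\<^sub>1 g x :: "'a::real_inner"
  assumes "w \<in> cball (w\<^sub>1 - (1/2) *\<^sub>R g) (norm g / 2)"
  shows "w\<^sub>1 \<bullet> x - gam g x \<le> w \<bullet> x" and "w \<bullet> x \<le> w\<^sub>1 \<bullet> x + del g x"
proof -
  define r where "r = w - (w\<^sub>1 - (1/2) *\<^sub>R g)"
  have "norm r \<le> norm g / 2"
    using assms by (simp add: r_def dist_norm norm_minus_commute)
  then have "\<bar>r \<bullet> x\<bar> \<le> norm g / 2 * norm x"
    by (meson Cauchy_Schwarz_ineq2 mult_right_mono norm_ge_zero order_trans)
  moreover have "w \<bullet> x = w\<^sub>1 \<bullet> x - (g \<bullet> x) / 2 + r \<bullet> x"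
    by (simp add: r_def algebra_simps)
  ultimately show "w\<^sub>1 \<bullet> x - gam g x \<le> w \<bullet> x" and "w \<bullet> x \<le> w\<^sub>1 \<bullet> x + del g x"
    by (auto simp: gam_def del_def algebra_simps)
qed

lemma val_err_ge_card:
  assumes "A \<subseteq> {i\<in>{1..n'}. y' i * (w \<bullet> x' i) < 0}"
  shows "real (card A) / real n' \<le> val_err n' x' y' w"
  unfolding val_err_def using assms
  by (intro divide_right_mono) (auto intro: card_mono)

lemma val_err_le_card:
  assumes "C \<subseteq> {1..n'}" and "\<And>i. i \<in> C \<Longrightarrow> 0 \<le> y' i * (w \<bullet> x' i)"
  shows "val_err n' x' y' w \<le> 1 - real (card C) / real n'"
proof -
  let ?E = "{i\<in>{1..n'}. y' i * (w \<bullet> x' i) < 0}"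
  have disjoint: "?E \<inter> C = {}"
    using assms(2) by fastforce
  have "?E \<union> C \<subseteq> {1..n'}"
    using assms(1) by auto
  have "finite C"
    using assms(1) finite_subset by blast
  then have "card ?E + card C = card (?E \<union> C)"
    using card_Un_disjoint[OF _ _ disjoint] by simp
  also have "\<dots> \<le> n'"
    using card_mono[OF _ \<open>?E \<union> C \<subseteq> {1..n'}\<close>] by simp
  finally have "card ?E + card C \<le> n'" .
  then show ?thesis
    unfolding val_err_def by (cases "n' = 0") (simp_all add: field_simps)
qed

lemma val_err_bounds_from_score_bounds:
  assumes lower: "\<And>i. lo i \<le> w \<bullet> x' i" and upper: "\<And>i. w \<bullet> x' i \<le> hi i"
  shows "(real (card {i\<in>{1..n'}. y' i = 1 \<and> hi i < 0})
          + real (card {i\<in>{1..n'}. y' i = -1 \<and> lo i > 0})) / real n' \<le> val_err n' x' y' w"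
    and "val_err n' x' y' w \<le> 1 -
          (real (card {i\<in>{1..n'}. y' i = 1 \<and> lo i \<ge> 0})
          + real (card {i\<in>{1..n'}. y' i = -1 \<and> hi i \<le> 0})) / real n'"
proof -
  let ?A1 = "{i\<in>{1..n'}. y' i = 1 \<and> hi i < 0}" and ?A2 = "{i\<in>{1..n'}. y' i = -1 \<and> lo i > 0}"
  let ?C1 = "{i\<in>{1..n'}. y' i = 1 \<and> lo i \<ge> 0}" and ?C2 = "{i\<in>{1..n'}. y' i = -1 \<and> hi i \<le> 0}"
  have "?A1 \<union> ?A2 \<subseteq> {i\<in>{1..n'}. y' i * (w \<bullet> x' i) < 0}"
  proof
    fix i assume i: "i \<in> ?A1 \<union> ?A2"
    then have "y' i = 1 \<and> w \<bullet> x' i < 0 \<or> y' i = -1 \<and> w \<bullet> x' i > 0"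
      using lower[of i] upper[of i] by auto
    with i show "i \<in> {i\<in>{1..n'}. y' i * (w \<bullet> x' i) < 0}"
      by auto
  qed
  moreover have "card (?A1 \<union> ?A2) = card ?A1 + card ?A2"
    by (rule card_Un_disjoint) auto
  ultimately show "(real (card ?A1) + real (card ?A2)) / real n' \<le> val_err n' x' y' w"
    using val_err_ge_card[of "?A1 \<union> ?A2"] by simp
  have "0 \<le> y' i * (w \<bullet> x' i)" if "i \<in> ?C1 \<union> ?C2" for i
  proof -
    have "y' i = 1 \<and> w \<bullet> x' i \<ge> 0 \<or> y' i = -1 \<and> w \<bullet> x' i \<le> 0"
      using that lower[of i] upper[of i] by auto
    then show ?thesis
      by auto
  qed
  then have "val_err n' x' y' w \<le> 1 - real (card (?C1 \<union> ?C2)) / real n'"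
    by (intro val_err_le_card) auto
  moreover have "card (?C1 \<union> ?C2) = card ?C1 + card ?C2"
    by (rule card_Un_disjoint) auto
  ultimately show "val_err n' x' y' w \<le> 1 - (real (card ?C1) + real (card ?C2)) / real n'"
    by simp
qed

theorem corollary2:
  fixes x :: "nat \<Rightarrow> 'a::euclidean_space" and y :: "nat \<Rightarrow> real" and n :: nat
    and x' :: "nat \<Rightarrow> 'a" and y' :: "nat \<Rightarrow> real" and n' :: nat
    and loss :: "real \<Rightarrow> real \<Rightarrow> real"
    and Ct :: real and what wstar :: 'a and \<xi> :: "nat \<Rightarrow> 'a"
  assumes y_lab: "\<forall>i\<in>{1..n}. y i \<in> {-1, 1}"
    and y'_lab: "\<forall>i\<in>{1..n'}. y' i \<in> {-1, 1}"
    and loss_convex: "\<forall>t\<in>{-1, 1}. convex_on UNIV (loss t)"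
    and Ct_pos: "Ct > 0"
    and wstar_min: "\<forall>w. primal_obj loss n x y Ct wstar \<le> primal_obj loss n x y Ct w"
    and xi_sub: "\<forall>i\<in>{1..n}. \<xi> i \<in> subdiff (\<lambda>w. loss (y i) (w \<bullet> x i)) what"
  defines "g \<equiv> what + Ct *\<^sub>R (\<Sum>i=1..n. \<xi> i)"
  shows "(val_err n' x' y' wstar \<ge>
           (real (card {i\<in>{1..n'}. y' i = 1 \<and> what \<bullet> x' i + del g (x' i) < 0})
          + real (card {i\<in>{1..n'}. y' i = -1 \<and> what \<bullet> x' i - gam g (x' i) > 0})) / real n')
       \<and> (val_err n' x' y' wstar \<le> 1 -
           (real (card {i\<in>{1..n'}. y' i = 1 \<and> what \<bullet> x' i - gam g (x' i) \<ge> 0})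
          + real (card {i\<in>{1..n'}. y' i = -1 \<and> what \<bullet> x' i + del g (x' i) \<le> 0})) / real n')"
proof -
  define L where "L w = (\<Sum>i=1..n. loss (y i) (w \<bullet> x i))" for w
  have "convex_on UNIV (loss (y i))" if "i \<in> {1..n}" for i
    using y_lab loss_convex that by blast
  then have "convex_on UNIV (\<lambda>w. Ct * L w)"
    unfolding L_def using Ct_pos
    by (intro convex_on_cmul convex_on_sum_fun convex_on_compose_inner) auto
  moreover have "\<And>w. (1/2) * (norm wstar)\<^sup>2 + Ct * L wstar \<le> (1/2) * (norm w)\<^sup>2 + Ct * L w"
    using wstar_min by (simp add: primal_obj_def L_def)
  moreover have "Ct *\<^sub>R (\<Sum>i=1..n. \<xi> i) \<in> subdiff (\<lambda>w. Ct * L w) what"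
    unfolding L_def using xi_sub Ct_pos by (intro subdiff_cmul subdiff_sum) auto
  ultimately have ball: "wstar \<in> cball (what - (1/2) *\<^sub>R g) (norm g / 2)"
    unfolding g_def by (rule regularized_minimizer_in_cball)
  show ?thesis
    using val_err_bounds_from_score_bounds[where lo = "\<lambda>i. what \<bullet> x' i - gam g (x' i)"
        and hi = "\<lambda>i. what \<bullet> x' i + del g (x' i)"]
      inner_bounds_on_cball[OF ball]
    by blast
qed

end
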